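(* Consider the downlink clustered NOMA model and the problems $\mathcal{P}_1'$ and $\mathcal{P}_2'$ with Lagrangians $f$ and $g$ described in the context. Fix a precoder $\mathbf{P}^\star$, and choose the weights in $\mathcal{P}_2'$ as $$b_{k,i\to l}=\frac{1}{\varepsilon^{mmse}_{k,i\to l}}\quad\text{(evaluated at } \mathbf{P}^\star\text{)},\qquad 1\le l\le i\le L,\ 1\le k\le K,$$ and the thresholds as $\xi^{th}_{k,l}=1-R^{th}_{k,l}$. Then $\xi^{mmse}_{k,i\to l}=1-R_{k,i\to l}$ at $\mathbf{P}^\star$ for all $k$ and all $1\le l\le i\le L$. Moreover, $(\mathbf{P}^\star,\{R^\star_{k,l}\},c^\star,\mu,\kappa,\psi,\lambda)$ satisfies the KKT conditions of $\mathcal{P}_1'$ if and only if $(\mathbf{P}^\star,\{\xi^\star_{k,l}=1-R^\star_{k,l}\},\bar c^\star=L-c^\star,\bar\mu=\mu,\bar\kappa=\kappa,\bar\psi=\psi,\bar\lambda=\lambda)$ satisfies the KKT conditions of $\mathcal{P}_2'$. Consequently, the optimal precoders of the max-min fair sum rate problem $\mathcal{P}_1'$ and of the min-max fair weighted MMSE problem $\mathcal{P}_2'$ coincide at the optimal solution point.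
   Context: A base station with $M$ antennas serves $K$ clusters of $L$ single-antenna users each. User $i$ of cluster $k$ has channel row vector $\mathbf{h}_{k,i}\in\mathbb{C}^{1\times M}$. Power fractions satisfy $\alpha_{k,l}>0$, $\sum_{l=1}^L\alpha_{k,l}=1$. The precoder is $\mathbf{P}=[\mathbf{p}_1,\dots,\mathbf{p}_K]\in\mathbb{C}^{M\times K}$ with total power budget $E_{tx}>0$. For $1\le l\le i\le L$ define $r_{k,i\to l}=\sum_{j=l+1}^{L}\alpha_{k,j}|\mathbf{h}_{k,i}\mathbf{p}_k|^2+\sum_{t\ne k}|\mathbf{h}_{k,i}\mathbf{p}_t|^2+1$, $R_{k,i\to l}=\log\big(1+\alpha_{k,l}|\mathbf{h}_{k,i}\mathbf{p}_k|^2 r_{k,i\to l}^{-1}\big)$, $\varepsilon^{mmse}_{k,i\to l}=\big(\alpha_{k,l}^{-1}+|\mathbf{h}_{k,i}\mathbf{p}_k|^2 r_{k,i\to l}^{-1}\big)^{-1}$ (so that $R_{k,i\to l}=\log(\alpha_{k,l}/\varepsilon^{mmse}_{k,i\to l})$), and, for given weights $b_{k,i\to l}>0$, $\xi^{mmse}_{k,i\to l}=b_{k,i\to l}\varepsilon^{mmse}_{k,i\to l}-\log(\alpha_{k,l}b_{k,i\to l})$. Problem $\mathcal{P}_1'$: maximize $c$ over $\mathbf{P}$, $\{R_{k,l}\}$, $c$ subject to $c\le\sum_{l=1}^L R_{k,l}$ for all $k$; $R_{k,l}\le R_{k,i\to l}$ for all $k$ and $l\le i\le L$; $R^{th}_{k,l}\le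 R_{k,l}$ for all $k,l$ (given thresholds $R^{th}_{k,l}\ge0$); $\mathrm{Tr}(\mathbf{P}\mathbf{P}^H)\le E_{tx}$. Its Lagrangian is $f=-c+\sum_k\mu_k c-\sum_{k,l}\mu_k R_{k,l}+\sum_{k,l}\kappa_{k,l}(R^{th}_{k,l}-R_{k,l})+\lambda(\mathrm{Tr}(\mathbf{P}\mathbf{P}^H)-E_{tx})+\sum_{k}\sum_{l=1}^L\sum_{i=l}^L\psi_{k,i\to l}(R_{k,l}-R_{k,i\to l})$. Problem $\mathcal{P}_2'$ (weights $b_{k,i\to l}>0$ treated as fixed constants): minimize $\bar c$ over $\mathbf{P}$, $\{\xi_{k,l}\}$, $\bar c$ subject to $\sum_{l=1}^L\xi_{k,l}\le\bar c$ for all $k$; $\xi^{mmse}_{k,i\to l}\le\xi_{k,l}$ for all $k$ and $l\le i\le L$; $\xi_{k,l}\le\xi^{th}_{k,l}$ for all $k,l$; $\mathrm{Tr}(\mathbf{P}\mathbf{P}^H)\le E_{tx}$. Its Lagrangian is $g=\bar c-\sum_k\bar\mu_k\bar c+\sum_{k,l}\bar\mu_k\xi_{k,l}+\sum_{k,l}\bar\kappa_{k,l}(\xi_{k,l}-\xi^{th}_{k,l})+\bar\lambda(\mathrm{Tr}(\mathbf{P}\mathbf{P}^H)-E_{tx})+\sum_k\sum_{l=1}^L\sum_{i=l}^L\bar\psi_{k,i\to l}(\xi^{mmse}_{k,i\to l}-\xi_{k,l})$. KKT conditions: stationarity of the Lagrangian with respect to each $\mathbf{p}_k$ (complex gradient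 taken with respect to $\mathbf{p}_k^*$), with respect to the auxiliary scalar ($c$ or $\bar c$) and with respect to each $R_{k,l}$ (resp. $\xi_{k,l}$); primal feasibility; nonnegativity of all multipliers; and complementary slackness for every constraint. *)

theory Defs
  imports "HOL-Analysis.Analysis"
begin

(* Antenna index type 'm (finite, M = CARD('m)); clusters k \<in> {1..K}; users l \<in> {1..L}.
   Channels h k i :: complex^'m (row vector h_{k,i}); precoder P k :: complex^'m (column p_k).
   Triple-indexed quantities x_{k,i\<rightarrow>l} are written  x k i l. *)

definition hp :: "complex^'m \<Rightarrow> complex^'m \<Rightarrow> complex" where
  "hp hv pv = (\<Sum>j\<in>UNIV. hv$j * pv$j)"

definition gain :: "(nat \<Rightarrow> nat \<Rightarrow> complex^'m) \<Rightarrow> (nat \<Rightarrow> complex^'m) \<Rightarrow> nat \<Rightarrow> nat \<Rightarrow> nat \<Rightarrow> real" where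
  "gain h P k i t = (cmod (hp (h k i) (P t)))^2"

definition r_int :: "nat \<Rightarrow> nat \<Rightarrow> (nat \<Rightarrow> nat \<Rightarrow> real) \<Rightarrow> (nat \<Rightarrow> nat \<Rightarrow> complex^'m)
    \<Rightarrow> (nat \<Rightarrow> complex^'m) \<Rightarrow> nat \<Rightarrow> nat \<Rightarrow> nat \<Rightarrow> real" where
  "r_int K L \<alpha> h P k i l =
     (\<Sum>j\<in>{l+1..L}. \<alpha> k j) * gain h P k i k + (\<Sum>t\<in>{1..K}-{k}. gain h P k i t) + 1"

definition rate :: "nat \<Rightarrow> nat \<Rightarrow> (nat \<Rightarrow> nat \<Rightarrow> real) \<Rightarrow> (nat \<Rightarrow> nat \<Rightarrow> complex^'m)
    \<Rightarrow> (nat \<Rightarrow> complex^'m) \<Rightarrow> nat \<Rightarrow> nat \<Rightarrow> nat \<Rightarrow> real" where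
  "rate K L \<alpha> h P k i l = ln (1 + \<alpha> k l * gain h P k i k / r_int K L \<alpha> h P k i l)"

definition eps_mmse :: "nat \<Rightarrow> nat \<Rightarrow> (nat \<Rightarrow> nat \<Rightarrow> real) \<Rightarrow> (nat \<Rightarrow> nat \<Rightarrow> complex^'m)
    \<Rightarrow> (nat \<Rightarrow> complex^'m) \<Rightarrow> nat \<Rightarrow> nat \<Rightarrow> nat \<Rightarrow> real" where
  "eps_mmse K L \<alpha> h P k i l =
     inverse (inverse (\<alpha> k l) + gain h P k i k / r_int K L \<alpha> h P k i l)"

definition xi_mmse :: "nat \<Rightarrow> nat \<Rightarrow> (nat \<Rightarrow> nat \<Rightarrow> real) \<Rightarrow> (nat \<Rightarrow> nat \<Rightarrow> complex^'m)
    \<Rightarrow> (nat \<Rightarrow> nat \<Rightarrow> nat \<Rightarrow> real) \<Rightarrow> (nat \<Rightarrow> complex^'m) \<Rightarrow> nat \<Rightarrow> nat \<Rightarrow> nat \<Rightarrow> real" where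
  "xi_mmse K L \<alpha> h b P k i l =
     b k i l * eps_mmse K L \<alpha> h P k i l - ln (\<alpha> k l * b k i l)"

definition tr_pow :: "nat \<Rightarrow> (nat \<Rightarrow> complex^'m) \<Rightarrow> real" where
  "tr_pow K P = (\<Sum>k\<in>{1..K}. \<Sum>j\<in>UNIV. (cmod (P k $ j))^2)"

definition wirtinger_conj_grad :: "(complex^'m \<Rightarrow> real) \<Rightarrow> complex^'m \<Rightarrow> complex^'m" where
  "wirtinger_conj_grad F x =
     (\<chi> j. (complex_of_real (frechet_derivative F (at x) (axis j 1))
            + \<i> * complex_of_real (frechet_derivative F (at x) (axis j \<i>))) / 2)"

definition stationary_conj :: "(complex^'m \<Rightarrow> real) \<Rightarrow> complex^'m \<Rightarrow> bool" where
  "stationary_conj F x \<longleftrightarrow> F differentiable (at x) \<and> wirtinger_conj_grad F x = 0"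

definition lagr_f :: "nat \<Rightarrow> nat \<Rightarrow> (nat \<Rightarrow> nat \<Rightarrow> real) \<Rightarrow> (nat \<Rightarrow> nat \<Rightarrow> complex^'m)
    \<Rightarrow> real \<Rightarrow> (nat \<Rightarrow> nat \<Rightarrow> real)
    \<Rightarrow> (nat \<Rightarrow> complex^'m) \<Rightarrow> (nat \<Rightarrow> nat \<Rightarrow> real) \<Rightarrow> real
    \<Rightarrow> (nat \<Rightarrow> real) \<Rightarrow> (nat \<Rightarrow> nat \<Rightarrow> real) \<Rightarrow> (nat \<Rightarrow> nat \<Rightarrow> nat \<Rightarrow> real) \<Rightarrow> real \<Rightarrow> real" where
  "lagr_f K L \<alpha> h E Rth P R c mu kappa psi lam =
     - c + (\<Sum>k\<in>{1..K}. mu k * c)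
     - (\<Sum>k\<in>{1..K}. \<Sum>l\<in>{1..L}. mu k * R k l)
     + (\<Sum>k\<in>{1..K}. \<Sum>l\<in>{1..L}. kappa k l * (Rth k l - R k l))
     + lam * (tr_pow K P - E)
     + (\<Sum>k\<in>{1..K}. \<Sum>l\<in>{1..L}. \<Sum>i\<in>{l..L}. psi k i l * (R k l - rate K L \<alpha> h P k i l))"

text \<open>Lagrangian g of P2' (weights b fixed constants).\<close>
definition lagr_g :: "nat \<Rightarrow> nat \<Rightarrow> (nat \<Rightarrow> nat \<Rightarrow> real) \<Rightarrow> (nat \<Rightarrow> nat \<Rightarrow> complex^'m)
    \<Rightarrow> real \<Rightarrow> (nat \<Rightarrow> nat \<Rightarrow> nat \<Rightarrow> real) \<Rightarrow> (nat \<Rightarrow> nat \<Rightarrow> real)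
    \<Rightarrow> (nat \<Rightarrow> complex^'m) \<Rightarrow> (nat \<Rightarrow> nat \<Rightarrow> real) \<Rightarrow> real
    \<Rightarrow> (nat \<Rightarrow> real) \<Rightarrow> (nat \<Rightarrow> nat \<Rightarrow> real) \<Rightarrow> (nat \<Rightarrow> nat \<Rightarrow> nat \<Rightarrow> real) \<Rightarrow> real \<Rightarrow> real" where
  "lagr_g K L \<alpha> h E b xith P xi cb mu kappa psi lam =
     cb - (\<Sum>k\<in>{1..K}. mu k * cb)
     + (\<Sum>k\<in>{1..K}. \<Sum>l\<in>{1..L}. mu k * xi k l)
     + (\<Sum>k\<in>{1..K}. \<Sum>l\<in>{1..L}. kappa k l * (xi k l - xith k l))
     + lam * (tr_pow K P - E)
     + (\<Sum>k\<in>{1..K}. \<Sum>l\<in>{1..L}. \<Sum>i\<in>{l..L}. psi k i l * (xi_mmse K L \<alpha> h b P k i l - xi k l))"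

definition KKT1 :: "nat \<Rightarrow> nat \<Rightarrow> (nat \<Rightarrow> nat \<Rightarrow> real) \<Rightarrow> (nat \<Rightarrow> nat \<Rightarrow> complex^'m)
    \<Rightarrow> real \<Rightarrow> (nat \<Rightarrow> nat \<Rightarrow> real)
    \<Rightarrow> (nat \<Rightarrow> complex^'m) \<Rightarrow> (nat \<Rightarrow> nat \<Rightarrow> real) \<Rightarrow> real
    \<Rightarrow> (nat \<Rightarrow> real) \<Rightarrow> (nat \<Rightarrow> nat \<Rightarrow> real) \<Rightarrow> (nat \<Rightarrow> nat \<Rightarrow> nat \<Rightarrow> real) \<Rightarrow> real \<Rightarrow> bool" where
  "KKT1 K L \<alpha> h E Rth P R c mu kappa psi lam \<longleftrightarrow>
     \<comment> \<open>stationarity\<close>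
     (\<forall>k\<in>{1..K}. stationary_conj
        (\<lambda>q. lagr_f K L \<alpha> h E Rth (P(k := q)) R c mu kappa psi lam) (P k)) \<and>
     ((\<lambda>x. lagr_f K L \<alpha> h E Rth P R x mu kappa psi lam) has_real_derivative 0) (at c) \<and>
     (\<forall>k\<in>{1..K}. \<forall>l\<in>{1..L}.
        ((\<lambda>x. lagr_f K L \<alpha> h E Rth P (R(k := (R k)(l := x))) c mu kappa psi lam)
           has_real_derivative 0) (at (R k l))) \<and>
     \<comment> \<open>primal feasibility\<close>
     (\<forall>k\<in>{1..K}. c \<le> (\<Sum>l\<in>{1..L}. R k l)) \<and>
     (\<forall>k\<in>{1..K}. \<forall>l\<in>{1..L}. \<forall>i\<in>{l..L}. R k l \<le> rate K L \<alpha> h P k i l) \<and>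
     (\<forall>k\<in>{1..K}. \<forall>l\<in>{1..L}. Rth k l \<le> R k l) \<and>
     tr_pow K P \<le> E \<and>
     \<comment> \<open>dual feasibility\<close>
     (\<forall>k\<in>{1..K}. 0 \<le> mu k) \<and>
     (\<forall>k\<in>{1..K}. \<forall>l\<in>{1..L}. 0 \<le> kappa k l) \<and>
     (\<forall>k\<in>{1..K}. \<forall>l\<in>{1..L}. \<forall>i\<in>{l..L}. 0 \<le> psi k i l) \<and>
     0 \<le> lam \<and>
     \<comment> \<open>complementary slackness\<close>
     (\<forall>k\<in>{1..K}. mu k * (c - (\<Sum>l\<in>{1..L}. R k l)) = 0) \<and>
     (\<forall>k\<in>{1..K}. \<forall>l\<in>{1..L}. \<forall>i\<in>{l..L}. psi k i l * (R k l - rate K L \<alpha> h P k i l) = 0) \<and>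
     (\<forall>k\<in>{1..K}. \<forall>l\<in>{1..L}. kappa k l * (Rth k l - R k l) = 0) \<and>
     lam * (tr_pow K P - E) = 0"

definition KKT2 :: "nat \<Rightarrow> nat \<Rightarrow> (nat \<Rightarrow> nat \<Rightarrow> real) \<Rightarrow> (nat \<Rightarrow> nat \<Rightarrow> complex^'m)
    \<Rightarrow> real \<Rightarrow> (nat \<Rightarrow> nat \<Rightarrow> nat \<Rightarrow> real) \<Rightarrow> (nat \<Rightarrow> nat \<Rightarrow> real)
    \<Rightarrow> (nat \<Rightarrow> complex^'m) \<Rightarrow> (nat \<Rightarrow> nat \<Rightarrow> real) \<Rightarrow> real
    \<Rightarrow> (nat \<Rightarrow> real) \<Rightarrow> (nat \<Rightarrow> nat \<Rightarrow> real) \<Rightarrow> (nat \<Rightarrow> nat \<Rightarrow> nat \<Rightarrow> real) \<Rightarrow> real \<Rightarrow> bool" where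
  "KKT2 K L \<alpha> h E b xith P xi cb mu kappa psi lam \<longleftrightarrow>
     \<comment> \<open>stationarity\<close>
     (\<forall>k\<in>{1..K}. stationary_conj
        (\<lambda>q. lagr_g K L \<alpha> h E b xith (P(k := q)) xi cb mu kappa psi lam) (P k)) \<and>
     ((\<lambda>x. lagr_g K L \<alpha> h E b xith P xi x mu kappa psi lam) has_real_derivative 0) (at cb) \<and>
     (\<forall>k\<in>{1..K}. \<forall>l\<in>{1..L}.
        ((\<lambda>x. lagr_g K L \<alpha> h E b xith P (xi(k := (xi k)(l := x))) cb mu kappa psi lam)
           has_real_derivative 0) (at (xi k l))) \<and>
     \<comment> \<open>primal feasibility\<close>
     (\<forall>k\<in>{1..K}. (\<Sum>l\<in>{1..L}. xi k l) \<le> cb) \<and>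
     (\<forall>k\<in>{1..K}. \<forall>l\<in>{1..L}. \<forall>i\<in>{l..L}. xi_mmse K L \<alpha> h b P k i l \<le> xi k l) \<and>
     (\<forall>k\<in>{1..K}. \<forall>l\<in>{1..L}. xi k l \<le> xith k l) \<and>
     tr_pow K P \<le> E \<and>
     \<comment> \<open>dual feasibility\<close>
     (\<forall>k\<in>{1..K}. 0 \<le> mu k) \<and>
     (\<forall>k\<in>{1..K}. \<forall>l\<in>{1..L}. 0 \<le> kappa k l) \<and>
     (\<forall>k\<in>{1..K}. \<forall>l\<in>{1..L}. \<forall>i\<in>{l..L}. 0 \<le> psi k i l) \<and>
     0 \<le> lam \<and>
     \<comment> \<open>complementary slackness\<close>
     (\<forall>k\<in>{1..K}. mu k * ((\<Sum>l\<in>{1..L}. xi k l) - cb) = 0) \<and>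
     (\<forall>k\<in>{1..K}. \<forall>l\<in>{1..L}. \<forall>i\<in>{l..L}. psi k i l * (xi_mmse K L \<alpha> h b P k i l - xi k l) = 0) \<and>
     (\<forall>k\<in>{1..K}. \<forall>l\<in>{1..L}. kappa k l * (xi k l - xith k l) = 0) \<and>
     lam * (tr_pow K P - E) = 0"

end

theory Submission
  imports Defs
begin

text \<open>For each pair of users, xi_mmse + R - 1
  depends on the precoder only through the SINR-type ratio x = |h p|^2 / r, namely as
  b / (1 / \<alpha> + x) - ln (\<alpha> b) + ln (1 + \<alpha> x) - 1, and since b = 1 / \<alpha> + x0 for the value
  x0 of the ratio at P*, this function of x vanishes together with its derivative at x0.
  Vanishing gives xi_mmse = 1 - R at P*, which turns feasibility and complementary slackness of
  one problem into those of the other.  After the substitution \<xi> = 1 - R, cbar = L - c the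
  Lagrangian g is f plus a term that does not involve R and c and, by the vanishing derivative,
  is stationary in every column p_k at P*; so the stationarity conditions correspond as well,
  those in c and R through the reflections x \<mapsto> L - x and x \<mapsto> 1 - x.\<close>

lemma has_derivative_sum_0:
  assumes "\<And>i. i \<in> I \<Longrightarrow> (f i has_derivative (\<lambda>_. 0)) F"
  shows "((\<lambda>x. \<Sum>i\<in>I. f i x) has_derivative (\<lambda>_. 0)) F"
  using has_derivative_sum[of I f "\<lambda>_ _. 0" F, OF assms] by simp

lemma has_real_derivative_0_reflect:
  assumes "\<And>x. g x = f (a - x) + C" and "(f has_real_derivative 0) (at (a - y))"
  shows "(g has_real_derivative 0) (at y)"
proof -
  have g: "g = (\<lambda>x. f (a - x) + C)" using assms(1) by auto
  have "((\<lambda>x. a - x) has_real_derivative -1) (at y)"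
    by (auto intro!: derivative_eq_intros)
  from DERIV_chain2[OF assms(2) this]
  have "((\<lambda>x. f (a - x) + C) has_real_derivative 0) (at y)"
    by (auto intro!: derivative_eq_intros)
  then show ?thesis unfolding g .
qed

lemma has_real_derivative_0_reflect_iff:
  assumes "\<And>x. g x = f (a - x) + C"
  shows "(g has_real_derivative 0) (at (a - y)) \<longleftrightarrow> (f has_real_derivative 0) (at y)"
proof
  assume g_deriv: "(g has_real_derivative 0) (at (a - y))"
  have "f x = g (a - x) + - C" for x using assms[of "a - x"] by simp
  then show "(f has_real_derivative 0) (at y)" using g_deriv by (rule has_real_derivative_0_reflect)
next
  assume "(f has_real_derivative 0) (at y)"
  then have "(f has_real_derivative 0) (at (a - (a - y)))" by simp
  with assms show "(g has_real_derivative 0) (at (a - y))" by (rule has_real_derivative_0_reflect)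
qed

lemma stationary_conj_add_zero_derivative:
  assumes G: "\<And>q. G q = F q + D q" and D: "(D has_derivative (\<lambda>_. 0)) (at x)"
  shows "stationary_conj G x \<longleftrightarrow> stationary_conj F x"
proof -
  have "D differentiable (at x)" using D unfolding differentiable_def by blast
  moreover have "F = (\<lambda>q. G q - D q)" "G = (\<lambda>q. F q + D q)" using G by auto
  ultimately have diff: "G differentiable (at x) \<longleftrightarrow> F differentiable (at x)"
    by (metis differentiable_add differentiable_diff)
  have "frechet_derivative G (at x) = frechet_derivative F (at x)" if F_diff: "F differentiable (at x)"
  proof -
    obtain F' where F': "(F has_derivative F') (at x)"
      using F_diff unfolding differentiable_def by blast
    from F' D have "(G has_derivative (\<lambda>h. F' h + 0)) (at x)"
      unfolding \<open>G = (\<lambda>q. F q + D q)\<close> by (rule has_derivative_add)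
    then have "F' = frechet_derivative G (at x)" by (simp add: frechet_derivative_at)
    with frechet_derivative_at[OF F'] show ?thesis by simp
  qed
  with diff show ?thesis unfolding stationary_conj_def wirtinger_conj_grad_def by auto
qed

subsection \<open>The scalar MSE--rate gap\<close>

definition mmse_rate_gap :: "real \<Rightarrow> real \<Rightarrow> real \<Rightarrow> real" where
  "mmse_rate_gap a b x = b * inverse (inverse a + x) - ln (a * b) + ln (1 + a * x) - 1"

lemma mmse_rate_gap_optimal_weight:
  assumes "0 < a" "0 \<le> x"
  shows "mmse_rate_gap a (inverse a + x) x = 0"
proof -
  have "0 < inverse a + x" using assms by (simp add: add_pos_nonneg)
  moreover have "a * (inverse a + x) = 1 + a * x" using assms by (simp add: field_simps)
  ultimately show ?thesis unfolding mmse_rate_gap_def by simp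
qed

lemma mmse_rate_gap_optimal_weight_has_derivative_0:
  assumes "0 < a" "0 \<le> x"
  shows "(mmse_rate_gap a (inverse a + x) has_real_derivative 0) (at x)"
proof -
  have pos: "0 < inverse a + x" "0 < 1 + a * x"
    using assms by (simp_all add: add_pos_nonneg)
  then have ne: "inverse a + x \<noteq> 0" by simp
  have "a / (1 + a * x) = inverse (inverse a + x)"
    using assms pos by (simp add: field_simps)
  also have "\<dots> = inverse (inverse a + x) * inverse (inverse a + x) * (inverse a + x)"
    using ne by (simp add: mult.assoc)
  finally have slope:
    "a / (1 + a * x) = inverse (inverse a + x) * inverse (inverse a + x) * (inverse a + x)" .
  show ?thesis
    unfolding mmse_rate_gap_def
    by (rule DERIV_cong, (auto intro!: derivative_eq_intros simp: ne pos)[1]) (simp add: slope)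
qed

definition sinr :: "nat \<Rightarrow> nat \<Rightarrow> (nat \<Rightarrow> nat \<Rightarrow> real) \<Rightarrow> (nat \<Rightarrow> nat \<Rightarrow> complex^'m)
    \<Rightarrow> (nat \<Rightarrow> complex^'m) \<Rightarrow> nat \<Rightarrow> nat \<Rightarrow> nat \<Rightarrow> real" where
  "sinr K L \<alpha> h P k i l = gain h P k i k / r_int K L \<alpha> h P k i l"

lemma r_int_ge_1:
  assumes "0 \<le> (\<Sum>j\<in>{l+1..L}. \<alpha> k j)"
  shows "1 \<le> r_int K L \<alpha> h P k i l"
proof -
  have "0 \<le> (\<Sum>j\<in>{l+1..L}. \<alpha> k j) * gain h P k i k"
    using assms by (simp add: gain_def)
  moreover have "0 \<le> (\<Sum>t\<in>{1..K}-{k}. gain h P k i t)"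
    by (intro sum_nonneg) (simp add: gain_def)
  ultimately show ?thesis unfolding r_int_def by linarith
qed

lemma sinr_nonneg:
  assumes "0 \<le> (\<Sum>j\<in>{l+1..L}. \<alpha> k j)"
  shows "0 \<le> sinr K L \<alpha> h P k i l"
proof -
  have "1 \<le> r_int K L \<alpha> h P k i l" using assms by (rule r_int_ge_1)
  then show ?thesis unfolding sinr_def by (intro divide_nonneg_pos) (auto simp: gain_def)
qed

lemma hp_differentiable: "hp v differentiable (at q)"
  unfolding hp_def
  by (intro differentiable_sum ballI differentiable_mult differentiable_const
        bounded_linear_imp_differentiable[OF bounded_linear_vec_nth]) auto

lemma gain_update_differentiable:
  "(\<lambda>q. gain h (P(k := q)) k' i t) differentiable (at q\<^sub>0)"
  unfolding gain_def power2_norm_eq_inner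
  by (cases "t = k") (auto intro: differentiable_inner hp_differentiable)

lemma r_int_update_differentiable:
  "(\<lambda>q. r_int K L \<alpha> h (P(k := q)) k' i l) differentiable (at q\<^sub>0)"
  unfolding r_int_def
  by (intro differentiable_add differentiable_mult differentiable_const differentiable_sum
       ballI gain_update_differentiable finite_Diff finite_atLeastAtMost)

lemma sinr_update_differentiable:
  assumes "0 \<le> (\<Sum>j\<in>{l+1..L}. \<alpha> k' j)"
  shows "(\<lambda>q. sinr K L \<alpha> h (P(k := q)) k' i l) differentiable (at q\<^sub>0)"
proof -
  have "1 \<le> r_int K L \<alpha> h (P(k := q\<^sub>0)) k' i l" using assms by (rule r_int_ge_1)
  then show ?thesis unfolding sinr_def
    by (intro differentiable_divide gain_update_differentiable r_int_update_differentiable) auto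
qed

lemma xi_mmse_plus_rate:
  "xi_mmse K L \<alpha> h b P k i l + rate K L \<alpha> h P k i l - 1
     = mmse_rate_gap (\<alpha> k l) (b k i l) (sinr K L \<alpha> h P k i l)"
  unfolding xi_mmse_def eps_mmse_def rate_def sinr_def mmse_rate_gap_def by simp

lemma inverse_eps_mmse:
  "1 / eps_mmse K L \<alpha> h P k i l = inverse (\<alpha> k l) + sinr K L \<alpha> h P k i l"
  unfolding eps_mmse_def sinr_def by (simp add: divide_inverse)

lemma xi_mmse_optimal_weight:
  assumes "0 < \<alpha> k l" "0 \<le> (\<Sum>j\<in>{l+1..L}. \<alpha> k j)"
    and "b k i l = 1 / eps_mmse K L \<alpha> h P k i l"
  shows "xi_mmse K L \<alpha> h b P k i l = 1 - rate K L \<alpha> h P k i l"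
proof -
  have "0 \<le> sinr K L \<alpha> h P k i l" using assms(2) by (rule sinr_nonneg)
  with assms(1) have "mmse_rate_gap (\<alpha> k l) (b k i l) (sinr K L \<alpha> h P k i l) = 0"
    unfolding assms(3) inverse_eps_mmse by (simp add: mmse_rate_gap_optimal_weight)
  then show ?thesis using xi_mmse_plus_rate[of K L \<alpha> h b P k i l] by linarith
qed

lemma xi_mmse_plus_rate_optimal_weight_has_derivative_0:
  assumes "0 < \<alpha> k' l" "0 \<le> (\<Sum>j\<in>{l+1..L}. \<alpha> k' j)"
    and "b k' i l = 1 / eps_mmse K L \<alpha> h P k' i l"
  shows "((\<lambda>q. xi_mmse K L \<alpha> h b (P(k := q)) k' i l + rate K L \<alpha> h (P(k := q)) k' i l - 1)
           has_derivative (\<lambda>_. 0)) (at (P k))"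
proof -
  define x where "x q = sinr K L \<alpha> h (P(k := q)) k' i l" for q
  have "x differentiable (at (P k))"
    unfolding x_def using assms(2) by (rule sinr_update_differentiable)
  then obtain x' where x': "(x has_derivative x') (at (P k))"
    unfolding differentiable_def by blast
  have "0 \<le> x (P k)" unfolding x_def using assms(2) by (rule sinr_nonneg)
  moreover have "b k' i l = inverse (\<alpha> k' l) + x (P k)"
    unfolding x_def assms(3) inverse_eps_mmse by simp
  ultimately have "(mmse_rate_gap (\<alpha> k' l) (b k' i l) has_derivative (\<lambda>_. 0)) (at (x (P k)))"
    using mmse_rate_gap_optimal_weight_has_derivative_0[OF assms(1)]
    unfolding has_field_derivative_def lambda_zero by simp
  from has_derivative_compose[OF x' this] show ?thesis
    unfolding xi_mmse_plus_rate x_def .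
qed

subsection \<open>Comparing the two Lagrangians\<close>

definition lagr_gap :: "nat \<Rightarrow> nat \<Rightarrow> (nat \<Rightarrow> nat \<Rightarrow> real) \<Rightarrow> (nat \<Rightarrow> nat \<Rightarrow> complex^'m)
    \<Rightarrow> (nat \<Rightarrow> nat \<Rightarrow> nat \<Rightarrow> real) \<Rightarrow> (nat \<Rightarrow> nat \<Rightarrow> real) \<Rightarrow> (nat \<Rightarrow> nat \<Rightarrow> real)
    \<Rightarrow> (nat \<Rightarrow> nat \<Rightarrow> real) \<Rightarrow> (nat \<Rightarrow> nat \<Rightarrow> nat \<Rightarrow> real) \<Rightarrow> (nat \<Rightarrow> complex^'m) \<Rightarrow> real" where
  "lagr_gap K L \<alpha> h b xith Rth kappa psi P =
     real L + (\<Sum>k\<in>{1..K}. \<Sum>l\<in>{1..L}. kappa k l * (1 - xith k l - Rth k l))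
     + (\<Sum>k\<in>{1..K}. \<Sum>l\<in>{1..L}. \<Sum>i\<in>{l..L}. psi k i l *
          (xi_mmse K L \<alpha> h b P k i l + rate K L \<alpha> h P k i l - 1))"

lemma lagr_g_eq_lagr_f_plus_gap:
  "lagr_g K L \<alpha> h E b xith P (\<lambda>k l. 1 - R k l) (real L - c) mu kappa psi lam
   = lagr_f K L \<alpha> h E Rth P R c mu kappa psi lam + lagr_gap K L \<alpha> h b xith Rth kappa psi P"
proof -
  have "(\<Sum>k\<in>{1..K}. \<Sum>l\<in>{1..L}. mu k * (1 - R k l))
      = (\<Sum>k\<in>{1..K}. mu k * real L) - (\<Sum>k\<in>{1..K}. \<Sum>l\<in>{1..L}. mu k * R k l)"
    by (simp add: right_diff_distrib sum_subtractf mult.commute)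
  moreover have "(\<Sum>k\<in>{1..K}. mu k * (real L - c))
      = (\<Sum>k\<in>{1..K}. mu k * real L) - (\<Sum>k\<in>{1..K}. mu k * c)"
    by (simp add: right_diff_distrib sum_subtractf)
  moreover have "(\<Sum>k\<in>{1..K}. \<Sum>l\<in>{1..L}. kappa k l * (1 - R k l - xith k l))
      = (\<Sum>k\<in>{1..K}. \<Sum>l\<in>{1..L}. kappa k l * (Rth k l - R k l))
        + (\<Sum>k\<in>{1..K}. \<Sum>l\<in>{1..L}. kappa k l * (1 - xith k l - Rth k l))"
    by (simp add: sum.distrib[symmetric] algebra_simps)
  moreover have "(\<Sum>k\<in>{1..K}. \<Sum>l\<in>{1..L}. \<Sum>i\<in>{l..L}. psi k i l * (xi_mmse K L \<alpha> h b P k i l - (1 - R k l)))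
      = (\<Sum>k\<in>{1..K}. \<Sum>l\<in>{1..L}. \<Sum>i\<in>{l..L}. psi k i l * (R k l - rate K L \<alpha> h P k i l))
        + (\<Sum>k\<in>{1..K}. \<Sum>l\<in>{1..L}. \<Sum>i\<in>{l..L}. psi k i l *
            (xi_mmse K L \<alpha> h b P k i l + rate K L \<alpha> h P k i l - 1))"
    by (simp add: sum.distrib[symmetric] algebra_simps)
  ultimately show ?thesis
    unfolding lagr_f_def lagr_g_def lagr_gap_def by simp
qed

lemma lagr_gap_update_has_derivative_0:
  assumes alpha_pos: "\<forall>k\<in>{1..K}. \<forall>l\<in>{1..L}. 0 < \<alpha> k l"
    and b_choice: "\<forall>k\<in>{1..K}. \<forall>l\<in>{1..L}. \<forall>i\<in>{l..L}.
                     b k i l = 1 / eps_mmse K L \<alpha> h P k i l"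
  shows "((\<lambda>q. lagr_gap K L \<alpha> h b xith Rth kappa psi (P(k := q))) has_derivative (\<lambda>_. 0))
           (at (P k))"
proof -
  have "((\<lambda>q. xi_mmse K L \<alpha> h b (P(k := q)) k' i l + rate K L \<alpha> h (P(k := q)) k' i l - 1)
           has_derivative (\<lambda>_. 0)) (at (P k))"
    if "k' \<in> {1..K}" "l \<in> {1..L}" "i \<in> {l..L}" for k' l i
  proof (rule xi_mmse_plus_rate_optimal_weight_has_derivative_0)
    show "0 \<le> (\<Sum>j\<in>{l+1..L}. \<alpha> k' j)"
      using alpha_pos that by (intro sum_nonneg) (auto intro: less_imp_le)
  qed (use alpha_pos b_choice that in auto)
  then have "((\<lambda>q. \<Sum>k'\<in>{1..K}. \<Sum>l\<in>{1..L}. \<Sum>i\<in>{l..L}. psi k' i l *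
       (xi_mmse K L \<alpha> h b (P(k := q)) k' i l + rate K L \<alpha> h (P(k := q)) k' i l - 1))
       has_derivative (\<lambda>_. 0)) (at (P k))"
    by (intro has_derivative_sum_0 has_derivative_eq_rhs[OF has_derivative_mult_right]) auto
  then show ?thesis
    unfolding lagr_gap_def
    by (rule has_derivative_eq_rhs[OF has_derivative_add[OF has_derivative_const]]) simp
qed

lemma stationary_lagr_g_iff_stationary_lagr_f:
  assumes "\<forall>k\<in>{1..K}. \<forall>l\<in>{1..L}. 0 < \<alpha> k l"
    and "\<forall>k\<in>{1..K}. \<forall>l\<in>{1..L}. \<forall>i\<in>{l..L}. b k i l = 1 / eps_mmse K L \<alpha> h P k i l"
  shows "stationary_conj
           (\<lambda>q. lagr_g K L \<alpha> h E b xith (P(k := q)) (\<lambda>k l. 1 - R k l) (real L - c) mu kappa psi lam)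
           (P k)
    \<longleftrightarrow> stationary_conj (\<lambda>q. lagr_f K L \<alpha> h E Rth (P(k := q)) R c mu kappa psi lam) (P k)"
  using lagr_g_eq_lagr_f_plus_gap lagr_gap_update_has_derivative_0[OF assms]
  by (rule stationary_conj_add_zero_derivative)

lemma lagr_g_deriv_cbar_iff_lagr_f_deriv_c:
  "((\<lambda>x. lagr_g K L \<alpha> h E b xith P (\<lambda>k l. 1 - R k l) x mu kappa psi lam)
      has_real_derivative 0) (at (real L - c))
   \<longleftrightarrow> ((\<lambda>x. lagr_f K L \<alpha> h E Rth P R x mu kappa psi lam) has_real_derivative 0) (at c)"
proof -
  have "lagr_g K L \<alpha> h E b xith P (\<lambda>k l. 1 - R k l) x mu kappa psi lam
      = lagr_f K L \<alpha> h E Rth P R (real L - x) mu kappa psi lam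
        + lagr_gap K L \<alpha> h b xith Rth kappa psi P" for x
    using lagr_g_eq_lagr_f_plus_gap[of K L \<alpha> h E b xith P R "real L - x"] by simp
  then show ?thesis by (rule has_real_derivative_0_reflect_iff)
qed

lemma lagr_g_deriv_xi_iff_lagr_f_deriv_R:
  "((\<lambda>x. lagr_g K L \<alpha> h E b xith P ((\<lambda>k l. 1 - R k l)(k := (\<lambda>l. 1 - R k l)(l := x)))
          (real L - c) mu kappa psi lam) has_real_derivative 0) (at (1 - R k l))
   \<longleftrightarrow> ((\<lambda>x. lagr_f K L \<alpha> h E Rth P (R(k := (R k)(l := x))) c mu kappa psi lam)
          has_real_derivative 0) (at (R k l))"
proof -
  have "(\<lambda>k l. 1 - R k l)(k := (\<lambda>l. 1 - R k l)(l := x))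
      = (\<lambda>k' l'. 1 - (R(k := (R k)(l := 1 - x))) k' l')" for x
    by (auto simp: fun_eq_iff)
  then have "lagr_g K L \<alpha> h E b xith P ((\<lambda>k l. 1 - R k l)(k := (\<lambda>l. 1 - R k l)(l := x)))
          (real L - c) mu kappa psi lam
      = lagr_f K L \<alpha> h E Rth P (R(k := (R k)(l := 1 - x))) c mu kappa psi lam
        + lagr_gap K L \<alpha> h b xith Rth kappa psi P" for x
    using lagr_g_eq_lagr_f_plus_gap[of K L \<alpha> h E b xith P "R(k := (R k)(l := 1 - x))"] by simp
  then show ?thesis by (rule has_real_derivative_0_reflect_iff)
qed

lemma KKT1_iff_KKT2:
  assumes alpha_pos: "\<forall>k\<in>{1..K}. \<forall>l\<in>{1..L}. 0 < \<alpha> k l"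
    and b_choice: "\<forall>k\<in>{1..K}. \<forall>l\<in>{1..L}. \<forall>i\<in>{l..L}.
                     b k i l = 1 / eps_mmse K L \<alpha> h P k i l"
    and xi_mmse_eq: "\<forall>k\<in>{1..K}. \<forall>l\<in>{1..L}. \<forall>i\<in>{l..L}.
                     xi_mmse K L \<alpha> h b P k i l = 1 - rate K L \<alpha> h P k i l"
    and xith_choice: "\<forall>k\<in>{1..K}. \<forall>l\<in>{1..L}. xith k l = 1 - Rth k l"
  shows "KKT1 K L \<alpha> h E Rth P R c mu kappa psi lam
     \<longleftrightarrow> KKT2 K L \<alpha> h E b xith P (\<lambda>k l. 1 - R k l) (real L - c) mu kappa psi lam"
proof -
  have sum_xi: "(\<Sum>l\<in>{1..L}. 1 - R k l) = real L - (\<Sum>l\<in>{1..L}. R k l)" for k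
    by (simp add: sum_subtractf)
  have "(\<forall>k\<in>{1..K}. real L - (\<Sum>l\<in>{1..L}. R k l) \<le> real L - c)
      \<longleftrightarrow> (\<forall>k\<in>{1..K}. c \<le> (\<Sum>l\<in>{1..L}. R k l))"
    "(\<forall>k\<in>{1..K}. mu k * (real L - (\<Sum>l\<in>{1..L}. R k l) - (real L - c)) = 0)
      \<longleftrightarrow> (\<forall>k\<in>{1..K}. mu k * (c - (\<Sum>l\<in>{1..L}. R k l)) = 0)"
    by auto
  moreover have
    "(\<forall>k\<in>{1..K}. \<forall>l\<in>{1..L}. \<forall>i\<in>{l..L}. xi_mmse K L \<alpha> h b P k i l \<le> 1 - R k l)
      \<longleftrightarrow> (\<forall>k\<in>{1..K}. \<forall>l\<in>{1..L}. \<forall>i\<in>{l..L}. R k l \<le> rate K L \<alpha> h P k i l)"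
    "(\<forall>k\<in>{1..K}. \<forall>l\<in>{1..L}. \<forall>i\<in>{l..L}. psi k i l * (xi_mmse K L \<alpha> h b P k i l - (1 - R k l)) = 0)
      \<longleftrightarrow> (\<forall>k\<in>{1..K}. \<forall>l\<in>{1..L}. \<forall>i\<in>{l..L}. psi k i l * (R k l - rate K L \<alpha> h P k i l) = 0)"
    using xi_mmse_eq by auto
  moreover have
    "(\<forall>k\<in>{1..K}. \<forall>l\<in>{1..L}. 1 - R k l \<le> xith k l) \<longleftrightarrow> (\<forall>k\<in>{1..K}. \<forall>l\<in>{1..L}. Rth k l \<le> R k l)"
    "(\<forall>k\<in>{1..K}. \<forall>l\<in>{1..L}. kappa k l * (1 - R k l - xith k l) = 0)
      \<longleftrightarrow> (\<forall>k\<in>{1..K}. \<forall>l\<in>{1..L}. kappa k l * (Rth k l - R k l) = 0)"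
    using xith_choice by auto
  ultimately show ?thesis
    unfolding KKT1_def KKT2_def
    by (simp only: sum_xi stationary_lagr_g_iff_stationary_lagr_f[OF alpha_pos b_choice, where Rth = Rth]
        lagr_g_deriv_cbar_iff_lagr_f_deriv_c[where Rth = Rth]
        lagr_g_deriv_xi_iff_lagr_f_deriv_R[where Rth = Rth])
qed

theorem mainTheorem1:
  fixes K L :: nat
    and \<alpha> :: "nat \<Rightarrow> nat \<Rightarrow> real"
    and h :: "nat \<Rightarrow> nat \<Rightarrow> complex^'m"
    and E :: real
    and Rth :: "nat \<Rightarrow> nat \<Rightarrow> real"
    and Pstar :: "nat \<Rightarrow> complex^'m"
    and b :: "nat \<Rightarrow> nat \<Rightarrow> nat \<Rightarrow> real"
    and xith :: "nat \<Rightarrow> nat \<Rightarrow> real"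
  assumes K_pos: "1 \<le> K" and L_pos: "1 \<le> L"
    and alpha_pos: "\<forall>k\<in>{1..K}. \<forall>l\<in>{1..L}. 0 < \<alpha> k l"
    and alpha_sum: "\<forall>k\<in>{1..K}. (\<Sum>l\<in>{1..L}. \<alpha> k l) = 1"
    and E_pos: "0 < E"
    and Rth_nonneg: "\<forall>k\<in>{1..K}. \<forall>l\<in>{1..L}. 0 \<le> Rth k l"
    and b_choice: "\<forall>k\<in>{1..K}. \<forall>l\<in>{1..L}. \<forall>i\<in>{l..L}.
                     b k i l = 1 / eps_mmse K L \<alpha> h Pstar k i l"
    and xith_choice: "\<forall>k\<in>{1..K}. \<forall>l\<in>{1..L}. xith k l = 1 - Rth k l"
  shows "(\<forall>k\<in>{1..K}. \<forall>l\<in>{1..L}. \<forall>i\<in>{l..L}.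
            xi_mmse K L \<alpha> h b Pstar k i l = 1 - rate K L \<alpha> h Pstar k i l) \<and>
         (\<forall>R c mu kappa psi lam.
            KKT1 K L \<alpha> h E Rth Pstar R c mu kappa psi lam \<longleftrightarrow>
            KKT2 K L \<alpha> h E b xith Pstar (\<lambda>k l. 1 - R k l) (real L - c) mu kappa psi lam)"
proof -
  have xi_mmse_eq: "\<forall>k\<in>{1..K}. \<forall>l\<in>{1..L}. \<forall>i\<in>{l..L}.
      xi_mmse K L \<alpha> h b Pstar k i l = 1 - rate K L \<alpha> h Pstar k i l"
  proof (intro ballI xi_mmse_optimal_weight)
    fix k l i assume "k \<in> {1..K}" "l \<in> {1..L}" "i \<in> {l..L}"
    then show "0 < \<alpha> k l" "b k i l = 1 / eps_mmse K L \<alpha> h Pstar k i l"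
      and "0 \<le> (\<Sum>j\<in>{l+1..L}. \<alpha> k j)"
      using alpha_pos b_choice by (auto intro!: sum_nonneg intro: less_imp_le)
  qed
  with KKT1_iff_KKT2[OF alpha_pos b_choice xi_mmse_eq xith_choice] show ?thesis by blast
qed

end
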